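(* Let $m\in\mathbb N$, let $M_1,M_2\in{\rm Mat}_m(\mathbb Z)$, and let $S\in{\rm Mat}_m(\mathbb Z)\cap GL_m(\mathbb Q)$ satisfy $M_2=S^{-1}M_1S$. Then for every $n\in\mathbb N$ with $\gcd(n,\det(S))=1$, the move graphs $\Gamma_{M_1,\,n}$ and $\Gamma_{M_2,\,n}$ are isomorphic.
   Context: $\mathbb N$ is the set of positive integers and $\mathbb Z_n$ the integers modulo $n$. $GL_m(\mathbb Q)$ denotes the invertible $m\times m$ rational matrices. For $M\in{\rm Mat}_m(\mathbb Z)$, the move graph $\Gamma_{M,\,n}$ is the directed graph with vertex set $\mathbb Z_n^m$ and arc set $\{({\bf x},{\bf y}) : {\bf y}^T=M{\bf x}^T \text{ in } \mathbb Z_n^m\}$ (loops allowed). *)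

theory Defs
  imports "HOL-Analysis.Analysis"
begin

text \<open>Vertices of the move graph: Z_n^m, represented by integer vectors with
  entries in the canonical residue range 0..n-1.\<close>
definition move_vertices :: "nat \<Rightarrow> (int ^ 'm) set" where
  "move_vertices n = {x. \<forall>i. 0 \<le> x $ i \<and> x $ i < int n}"

definition move_arcs :: "int ^ 'm ^ 'm \<Rightarrow> nat \<Rightarrow> ((int ^ 'm) \<times> (int ^ 'm)) set" where
  "move_arcs M n = {(x, y). x \<in> move_vertices n \<and> y \<in> move_vertices n \<and>
                          (\<forall>i. y $ i = ((M *v x) $ i) mod int n)}"

definition move_graph :: "int ^ 'm ^ 'm \<Rightarrow> nat \<Rightarrow> (int ^ 'm) set \<times> ((int ^ 'm) \<times> (int ^ 'm)) set" where
  "move_graph M n = (move_vertices n, move_arcs M n)"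

definition digraph_iso :: "'a set \<times> ('a \<times> 'a) set \<Rightarrow> 'b set \<times> ('b \<times> 'b) set \<Rightarrow> bool" where
  "digraph_iso G H \<longleftrightarrow> (\<exists>f. bij_betw f (fst G) (fst H) \<and>
      (\<forall>x\<in>fst G. \<forall>y\<in>fst G. (x, y) \<in> snd G \<longleftrightarrow> (f x, f y) \<in> snd H))"

definition rat_mat :: "int ^ 'n ^ 'm \<Rightarrow> rat ^ 'n ^ 'm" where
  "rat_mat A = (\<chi> i j. of_int (A $ i $ j))"

end

theory Submission
  imports Defs "HOL-Number_Theory.Cong"
begin

text \<open>Since \<open>S M\<^sub>2 = M\<^sub>1 S\<close> over the integers, the map \<open>x \<mapsto> S x mod n\<close> carries
  arcs of \<open>\<Gamma>\<^sub>M\<^sub>2\<^sub>,\<^sub>n\<close> to arcs of \<open>\<Gamma>\<^sub>M\<^sub>1\<^sub>,\<^sub>n\<close>. By Cramer's rule \<open>x\<^sub>k det S\<close> is an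
  integer polynomial in the entries of \<open>S\<close> and \<open>S x\<close>, so \<open>S x mod n\<close> determines
  \<open>x\<^sub>k det S mod n\<close>; as \<open>det S\<close> is a unit modulo \<open>n\<close>, it determines \<open>x mod n\<close>.
  Hence the map is injective on the finite set \<open>\<int>\<^sub>n\<^sup>m\<close>, thus bijective, and the same
  cancellation shows that it reflects arcs as well.\<close>

lemma rat_mat_inject: "rat_mat A = rat_mat B \<longleftrightarrow> A = B"
  unfolding rat_mat_def by (simp add: vec_eq_iff)

lemma rat_mat_mult: "rat_mat (A ** B) = rat_mat A ** rat_mat B"
  unfolding rat_mat_def matrix_matrix_mult_def by (simp add: vec_eq_iff)

lemma det_rat_mat: "det (rat_mat A) = of_int (det A)"
  unfolding det_def rat_mat_def by simp

lemma matrix_inv_right: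
  assumes "invertible (A :: 'a::semiring_1^'n^'m)"
  shows "A ** matrix_inv A = mat 1"
  using assms unfolding invertible_def matrix_inv_def by (rule someI2_ex) auto

lemma cramer_lemma_int:
  fixes S :: "int^'n^'n"
  shows "det (\<chi> i j. if j = k then (S *v x)$i else S$i$j) = x$k * det S"
proof -
  let ?x = "\<chi> i. (of_int (x$i) :: rat)"
  have "rat_mat (\<chi> i j. if j = k then (S *v x)$i else S$i$j)
      = (\<chi> i j. if j = k then (rat_mat S *v ?x)$i else rat_mat S$i$j)"
    unfolding rat_mat_def matrix_vector_mult_def by (simp add: vec_eq_iff)
  then have "(of_int (det (\<chi> i j. if j = k then (S *v x)$i else S$i$j)) :: rat)
      = ?x$k * det (rat_mat S)"
    by (simp only: det_rat_mat[symmetric] cramer_lemma)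
  then have "(of_int (det (\<chi> i j. if j = k then (S *v x)$i else S$i$j)) :: rat)
      = of_int (x$k * det S)"
    by (simp add: det_rat_mat)
  then show ?thesis
    by (simp only: of_int_eq_iff)
qed

lemma cong_det:
  fixes A B :: "'a::unique_euclidean_ring^'n^'n"
  assumes "\<And>i j. [A$i$j = B$i$j] (mod m)"
  shows "[det A = det B] (mod m)"
  unfolding det_def by (intro cong_sum cong_scalar_left cong_prod assms)

lemma cong_matrix_vector_mult:
  fixes A :: "'a::unique_euclidean_ring^'n^'k"
  assumes "\<And>j. [x$j = y$j] (mod m)"
  shows "[(A *v x)$i = (A *v y)$i] (mod m)"
  unfolding matrix_vector_mult_def vec_lambda_beta by (intro cong_sum cong_scalar_left assms)

lemma cong_cancel_matrix_vector_mult: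
  fixes S :: "int^'n^'n"
  assumes "coprime (det S) m" and "\<And>i. [(S *v x)$i = (S *v y)$i] (mod m)"
  shows "[x$k = y$k] (mod m)"
proof -
  have "[det (\<chi> i j. if j = k then (S *v x)$i else S$i$j)
       = det (\<chi> i j. if j = k then (S *v y)$i else S$i$j)] (mod m)"
    using assms(2) by (intro cong_det) (simp add: cong_refl)
  then have "[x$k * det S = y$k * det S] (mod m)"
    by (simp only: cramer_lemma_int)
  with assms(1) show ?thesis
    by (simp add: cong_mult_rcancel)
qed

definition vec_mod :: "int \<Rightarrow> int^'n \<Rightarrow> int^'n" where
  "vec_mod m x = (\<chi> i. x$i mod m)"

lemma vec_mod_eq_iff: "vec_mod m x = vec_mod m y \<longleftrightarrow> (\<forall>i. [x$i = y$i] (mod m))"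
  by (simp add: vec_mod_def vec_eq_iff cong_def)

lemma vec_mod_matrix_vector_mult_mod: "vec_mod m (A *v vec_mod m x) = vec_mod m (A *v x)"
  unfolding vec_mod_eq_iff by (intro allI cong_matrix_vector_mult) (simp add: vec_mod_def cong_def)

lemma vec_mod_matrix_vector_mult_eq_iff:
  fixes S :: "int^'n^'n"
  assumes "coprime (det S) m"
  shows "vec_mod m (S *v x) = vec_mod m (S *v y) \<longleftrightarrow> vec_mod m x = vec_mod m y"
  using assms by (auto simp: vec_mod_eq_iff intro: cong_cancel_matrix_vector_mult cong_matrix_vector_mult)

lemma in_move_vertices_iff:
  assumes "0 < n"
  shows "x \<in> move_vertices n \<longleftrightarrow> vec_mod (int n) x = x"
  using assms by (auto simp: move_vertices_def vec_eq_iff vec_mod_def mod_eq_self_iff_div_eq_0 zdiv_eq_0_iff)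

lemma vec_mod_in_move_vertices: "0 < n \<Longrightarrow> vec_mod (int n) x \<in> move_vertices n"
  by (simp add: move_vertices_def vec_mod_def)

lemma move_arcs_iff:
  "(x, y) \<in> move_arcs M n \<longleftrightarrow>
     x \<in> move_vertices n \<and> y \<in> move_vertices n \<and> y = vec_mod (int n) (M *v x)"
  by (auto simp: move_arcs_def vec_mod_def vec_eq_iff)

lemma finite_move_vertices: "finite (move_vertices n :: (int^'m) set)"
proof -
  have "move_vertices n \<subseteq> vec_lambda ` (PiE UNIV (\<lambda>_::'m. {0..<int n}))"
  proof
    fix x :: "int^'m"
    assume "x \<in> move_vertices n"
    then have "(\<lambda>i. x$i) \<in> PiE UNIV (\<lambda>_::'m. {0..<int n})"
      unfolding move_vertices_def by auto
    then show "x \<in> vec_lambda ` (PiE UNIV (\<lambda>_::'m. {0..<int n}))"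
      by (metis image_eqI vec_lambda_eta)
  qed
  then show ?thesis
    by (rule finite_subset) (simp add: finite_PiE)
qed

lemma digraph_iso_sym:
  assumes "digraph_iso G H"
  shows "digraph_iso H G"
proof -
  obtain g where g: "bij_betw g (fst G) (fst H)"
    and arcs: "\<forall>x\<in>fst G. \<forall>y\<in>fst G. (x, y) \<in> snd G \<longleftrightarrow> (g x, g y) \<in> snd H"
    using assms unfolding digraph_iso_def by blast
  let ?f = "inv_into (fst G) g"
  have f: "bij_betw ?f (fst H) (fst G)"
    using g by (rule bij_betw_inv_into)
  have "(x, y) \<in> snd H \<longleftrightarrow> (?f x, ?f y) \<in> snd G" if "x \<in> fst H" "y \<in> fst H" for x y
    using that arcs bij_betw_apply[OF f] bij_betw_inv_into_right[OF g] by metis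
  with f show ?thesis
    unfolding digraph_iso_def by blast
qed

lemma digraph_iso_move_graph_intertwining:
  fixes M1 M2 S :: "int^'m^'m"
  assumes SM: "S ** M2 = M1 ** S" and "0 < n" and cop: "coprime (det S) (int n)"
  shows "digraph_iso (move_graph M2 n) (move_graph M1 n)"
proof -
  let ?V = "move_vertices n :: (int^'m) set"
  let ?r = "vec_mod (int n)"
  define g where "g x = ?r (S *v x)" for x
  have gV: "g x \<in> ?V" for x
    unfolding g_def using \<open>0 < n\<close> by (rule vec_mod_in_move_vertices)
  have canon: "?r x = x" if "x \<in> ?V" for x
    using that \<open>0 < n\<close> by (simp add: in_move_vertices_iff)
  have "inj_on g ?V"
    by (rule inj_onI) (metis canon g_def vec_mod_matrix_vector_mult_eq_iff[OF cop])
  moreover from this have "g ` ?V = ?V"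
    using finite_move_vertices gV by (intro endo_inj_surj) auto
  ultimately have bij: "bij_betw g ?V ?V"
    unfolding bij_betw_def by blast
  have "(u, v) \<in> move_arcs M2 n \<longleftrightarrow> (g u, g v) \<in> move_arcs M1 n"
    if "u \<in> ?V" "v \<in> ?V" for u v
  proof -
    have "(u, v) \<in> move_arcs M2 n \<longleftrightarrow> ?r v = ?r (M2 *v u)"
      using that by (simp add: move_arcs_iff canon)
    also have "\<dots> \<longleftrightarrow> ?r (S *v v) = ?r (S *v (M2 *v u))"
      using cop by (simp add: vec_mod_matrix_vector_mult_eq_iff)
    also have "\<dots> \<longleftrightarrow> g v = ?r (M1 *v g u)"
      by (simp add: g_def matrix_vector_mul_assoc SM vec_mod_matrix_vector_mult_mod)
    also have "\<dots> \<longleftrightarrow> (g u, g v) \<in> move_arcs M1 n"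
      using gV that by (simp add: move_arcs_iff)
    finally show ?thesis .
  qed
  with bij show ?thesis
    unfolding digraph_iso_def move_graph_def by auto
qed

theorem theorem3p5:
  fixes M1 M2 S :: "int ^ 'm ^ 'm" and n :: nat
  assumes "invertible (rat_mat S)"
    and "rat_mat M2 = matrix_inv (rat_mat S) ** rat_mat M1 ** rat_mat S"
    and "n > 0"
    and "gcd (int n) (det S) = 1"
  shows "digraph_iso (move_graph M1 n) (move_graph M2 n)"
proof -
  have "rat_mat (S ** M2) = rat_mat (M1 ** S)"
    using assms(2) matrix_inv_right[OF assms(1)]
    by (simp add: rat_mat_mult matrix_mul_assoc)
  then have "S ** M2 = M1 ** S"
    by (simp only: rat_mat_inject)
  moreover have "coprime (det S) (int n)"
    using assms(4) by (simp add: coprime_iff_gcd_eq_1 gcd.commute)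
  ultimately show ?thesis
    using assms(3) by (intro digraph_iso_sym[OF digraph_iso_move_graph_intertwining])
qed

end
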